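(* In the shifted geometric model with $N\ge 2$ total observations and $0<p<1$, with $\hat p_{\mathrm{ml}}=1/(\bar{\bar X}-a+1)$ and $\hat p_{\mathrm b}=\frac{N-1}{N}\hat p_{\mathrm{ml}}$, $$E(\hat p_{\mathrm{ml}})=p\,{}_2F_1(1,1;N+1;1-p)=p+\sum_{k=1}^\infty\frac{p(1-p)^k}{\binom{N+k}{k}},$$ so that $\mathrm{Bias}(\hat p_{\mathrm{ml}})=E(\hat p_{\mathrm{ml}})-p=\sum_{k=1}^\infty\frac{p(1-p)^k}{\binom{N+k}{k}}$ and $\mathrm{Bias}(\hat p_{\mathrm b})=-\frac pN+\frac{N-1}{N}\sum_{k=1}^\infty\frac{p(1-p)^k}{\binom{N+k}{k}}$.
   Context: Model: $X_{ij}$, $i=1,\dots,m$, $j=1,\dots,n_i$, are iid with probability mass function $P(X_{ij}=x)=p(1-p)^{x-a}$, $x=a,a+1,\dots$, $a$ a known integer; $N=\sum_i n_i$, $\bar{\bar X}=\frac1N\sum_{i,j}X_{ij}$. ${}_2F_1(a,b;c;z)=\sum_{k\ge0}\frac{(a)_k(b)_k}{(c)_k}\frac{z^k}{k!}$ with Pochhammer symbol $(x)_k=x(x+1)\cdots(x+k-1)$, $(x)_0=1$. *)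

theory Defs
  imports "HOL-Probability.Probability"
begin

definition hyp2F1 :: "real \<Rightarrow> real \<Rightarrow> real \<Rightarrow> real \<Rightarrow> real" where
  "hyp2F1 a b c z = (\<Sum>k. pochhammer a k * pochhammer b k / pochhammer c k * z ^ k / fact k)"

definition shifted_geom_pmf :: "int \<Rightarrow> real \<Rightarrow> int pmf" where
  "shifted_geom_pmf a p = map_pmf (\<lambda>y. a + int y) (geometric_pmf p)"

definition obs_index :: "nat \<Rightarrow> (nat \<Rightarrow> nat) \<Rightarrow> (nat \<times> nat) set" where
  "obs_index m n = {(i, j). i < m \<and> j < n i}"

definition sample_pmf :: "nat \<Rightarrow> (nat \<Rightarrow> nat) \<Rightarrow> int \<Rightarrow> real \<Rightarrow> (nat \<times> nat \<Rightarrow> int) pmf" where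
  "sample_pmf m n a p = Pi_pmf (obs_index m n) 0 (\<lambda>_. shifted_geom_pmf a p)"

definition grand_mean :: "nat \<Rightarrow> (nat \<Rightarrow> nat) \<Rightarrow> (nat \<times> nat \<Rightarrow> int) \<Rightarrow> real" where
  "grand_mean m n X = (1 / real (\<Sum>i<m. n i)) * (\<Sum>ij\<in>obs_index m n. real_of_int (X ij))"

definition p_ml :: "nat \<Rightarrow> (nat \<Rightarrow> nat) \<Rightarrow> int \<Rightarrow> (nat \<times> nat \<Rightarrow> int) \<Rightarrow> real" where
  "p_ml m n a X = 1 / (grand_mean m n X - real_of_int a + 1)"

definition p_b :: "nat \<Rightarrow> (nat \<Rightarrow> nat) \<Rightarrow> int \<Rightarrow> (nat \<times> nat \<Rightarrow> int) \<Rightarrow> real" where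
  "p_b m n a X = (real (\<Sum>i<m. n i) - 1) / real (\<Sum>i<m. n i) * p_ml m n a X"

end

theory Submission
  imports Defs
begin

text \<open>
  The excess S = sum of (X_ij - a) over the sample is a sum of N iid geometric variables, hence
  negative binomial of order N, and the maximum likelihood estimator equals N/(N + S).  The
  expectation of N/(N + S) is identified with the series of p (1-p)^k / C(N+k,k) as a Cauchy
  product: convolving these terms with the negative binomial law of order N - 1, whose
  probabilities sum to 1, reproduces P(S = s) N/(N + s) term by term.  Both convolution factors
  satisfy first-order hypergeometric recurrences, which makes their weighted convolution obey a
  recurrence that is solved by induction.  Since (1)_k = k! and (N+1)_k = k! C(N+k,k), the same
  series is p 2F1(1,1;N+1;1-p).
\<close>

lemma map_sum_Pi_pmf_geometric:
  fixes M :: "'b pmf" and f :: "'b \<Rightarrow> nat"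
  assumes "finite I" and "map_pmf f M = geometric_pmf p"
  shows "map_pmf (\<lambda>X. \<Sum>i\<in>I. f (X i)) (Pi_pmf I d (\<lambda>_. M)) = neg_binomial_pmf (card I) p"
  using assms(1)
proof (induction I rule: finite_induct)
  case empty
  then show ?case by simp
next
  case (insert x A)
  let ?S = "\<lambda>X. \<Sum>i\<in>A. f (X i)"
  have "map_pmf (\<lambda>X. \<Sum>i\<in>insert x A. f (X i)) (Pi_pmf (insert x A) d (\<lambda>_. M))
      = map_pmf (\<lambda>(u, v). u + v) (map_pmf (\<lambda>(y, X). (f y, ?S X)) (pair_pmf M (Pi_pmf A d (\<lambda>_. M))))"
    using insert by (simp add: Pi_pmf_insert map_pmf_comp case_prod_beta')
         (intro map_pmf_cong refl, auto intro!: sum.cong)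
  also have "\<dots> = neg_binomial_pmf (Suc (card A)) p"
    by (simp add: map_pair assms(2) insert.IH neg_binomial_pmf_Suc)
  finally show ?case using insert by simp
qed

lemma expectation_nat_pmf_eq_suminf:
  fixes M :: "nat pmf" and f :: "nat \<Rightarrow> real"
  assumes "summable (\<lambda>s. norm (pmf M s * f s))"
  shows "measure_pmf.expectation M f = (\<Sum>s. pmf M s * f s)"
proof -
  have "measure_pmf.expectation M f = (\<integral>s. pmf M s * f s \<partial>count_space UNIV)"
    unfolding measure_pmf_eq_density by (subst integral_density) auto
  also have "\<dots> = (\<Sum>s. pmf M s * f s)"
    using assms by (intro integral_count_space_nat) (simp add: integrable_count_space_nat_iff)
  finally show ?thesis .
qed

lemma pmf_nat_sums_1:
  fixes M :: "nat pmf"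
  shows "pmf M sums 1"
proof -
  have "integrable (count_space UNIV) (pmf M)"
    by (rule integrable_pmf)
  moreover from this have "(\<Sum>s. pmf M s) = 1"
    by (simp add: integral_pmf flip: integral_count_space_nat)
  ultimately show ?thesis
    by (simp add: sums_iff integrable_count_space_nat_iff)
qed

lemma hypergeometric_convolution_step:
  fixes b c :: "nat \<Rightarrow> real" and \<alpha> :: real
  assumes b: "\<And>k. (\<alpha> + real k + 1) * b (Suc k) = (real k + 1) * b k"
    and c: "\<And>j. (real j + 1) * c (Suc j) = (\<alpha> + real j - 1) * c j"
  shows "(\<alpha> + real s + 1) * (\<Sum>k\<le>Suc s. b k * c (Suc s - k))
           = \<alpha> * b 0 * c (Suc s) + (\<alpha> + real s) * (\<Sum>k\<le>s. b k * c (s - k))"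
proof -
  have "(\<alpha> + real s + 1) * (\<Sum>k\<le>Suc s. b k * c (Suc s - k))
      = (\<Sum>k\<le>Suc s. (\<alpha> + real k) * b k * c (Suc s - k))
        + (\<Sum>k\<le>Suc s. real (Suc s - k) * b k * c (Suc s - k))"
    unfolding sum_distrib_left sum.distrib[symmetric]
    by (intro sum.cong refl) (simp add: of_nat_diff algebra_simps)
  also have "(\<Sum>k\<le>Suc s. (\<alpha> + real k) * b k * c (Suc s - k))
      = \<alpha> * b 0 * c (Suc s) + (\<Sum>k\<le>s. (real k + 1) * b k * c (s - k))"
  proof -
    have shift: "(\<alpha> + real (Suc k)) * b (Suc k) * c (s - k) = (real k + 1) * b k * c (s - k)" for k
    proof -
      have "(\<alpha> + real (Suc k)) * b (Suc k) * c (s - k) = ((\<alpha> + real k + 1) * b (Suc k)) * c (s - k)"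
        by (simp add: algebra_simps)
      then show ?thesis
        by (simp only: b)
    qed
    show ?thesis
      unfolding sum.atMost_Suc_shift diff_Suc_Suc shift by simp
  qed
  also have "(\<Sum>k\<le>Suc s. real (Suc s - k) * b k * c (Suc s - k))
      = (\<Sum>k\<le>s. (\<alpha> + real (s - k) - 1) * b k * c (s - k))"
  proof -
    have reindex: "real (Suc s - k) * b k * c (Suc s - k) = (\<alpha> + real (s - k) - 1) * b k * c (s - k)"
      if "k \<le> s" for k
    proof -
      have "real (Suc s - k) * c (Suc s - k) = (\<alpha> + real (s - k) - 1) * c (s - k)"
        using c[of "s - k"] that by (simp add: Suc_diff_le add.commute)
      then show ?thesis
        by (simp only: mult.commute mult.left_commute)
    qed
    have "(\<Sum>k\<le>Suc s. real (Suc s - k) * b k * c (Suc s - k))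
        = (\<Sum>k\<le>s. real (Suc s - k) * b k * c (Suc s - k))"
      by (simp add: sum.atMost_Suc)
    also have "\<dots> = (\<Sum>k\<le>s. (\<alpha> + real (s - k) - 1) * b k * c (s - k))"
      by (intro sum.cong refl reindex) simp
    finally show ?thesis .
  qed
  also have "\<alpha> * b 0 * c (Suc s) + (\<Sum>k\<le>s. (real k + 1) * b k * c (s - k))
      + (\<Sum>k\<le>s. (\<alpha> + real (s - k) - 1) * b k * c (s - k))
      = \<alpha> * b 0 * c (Suc s) + (\<alpha> + real s) * (\<Sum>k\<le>s. b k * c (s - k))"
    unfolding add.assoc sum_distrib_left sum.distrib[symmetric]
    by (intro arg_cong2[where f = "(+)"] sum.cong refl) (simp add: of_nat_diff algebra_simps)
  finally show ?thesis .
qed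

lemma inverse_choose_recurrence:
  "(real N + real k + 1) * (1 / real (N + Suc k choose Suc k)) = (real k + 1) * (1 / real (N + k choose k))"
proof -
  have "real (Suc k) * real (Suc (N + k) choose Suc k) = real (Suc (N + k)) * real (N + k choose k)"
    by (metis Suc_times_binomial_eq mult.commute of_nat_mult)
  moreover have "real (N + k choose k) > 0" "real (Suc (N + k) choose Suc k) > 0"
    by (simp_all del: binomial_Suc_Suc)
  ultimately show ?thesis
    by (simp add: field_simps)
qed

lemma choose_shifted_recurrence:
  assumes "N \<ge> 2"
  shows "(real j + 1) * real (N - 2 + Suc j choose Suc j) = (real N + real j - 1) * real (N - 2 + j choose j)"
proof -
  have "real (Suc j) * real (Suc (N - 2 + j) choose Suc j) = real (Suc (N - 2 + j)) * real (N - 2 + j choose j)"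
    by (metis Suc_times_binomial_eq mult.commute of_nat_mult)
  moreover have "real (Suc (N - 2 + j)) = real N + real j - 1" "N - 2 + Suc j = Suc (N - 2 + j)"
    using assms by auto
  ultimately show ?thesis
    by (simp add: algebra_simps)
qed

lemma inverse_choose_convolution:
  assumes "N \<ge> 2"
  shows "(real N + real s) * (\<Sum>k\<le>s. 1 / real (N + k choose k) * real (N - 2 + (s - k) choose (s - k)))
           = real N * real (N + s - 1 choose s)"
proof (induction s)
  case 0
  then show ?case by simp
next
  case (Suc s)
  let ?b = "\<lambda>k. 1 / real (N + k choose k)" and ?c = "\<lambda>j. real (N - 2 + j choose j)"
  define M where "M = N + s - 1"
  have M: "N - 2 + Suc s = M" "N + Suc s - 1 = Suc M" "N + s - 1 = M"
    using assms by (auto simp: M_def)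
  have pascal: "real (N - 2 + Suc s choose Suc s) + real (N + s - 1 choose s) = real (N + Suc s - 1 choose Suc s)"
    unfolding M by simp
  have "(real N + real s + 1) * (\<Sum>k\<le>Suc s. ?b k * ?c (Suc s - k))
      = real N * ?b 0 * ?c (Suc s) + (real N + real s) * (\<Sum>k\<le>s. ?b k * ?c (s - k))"
    by (rule hypergeometric_convolution_step[where \<alpha> = "real N" and b = ?b and c = ?c,
        OF inverse_choose_recurrence choose_shifted_recurrence[OF assms]])
  also have "\<dots> = real N * (?c (Suc s) + real (N + s - 1 choose s))"
    by (simp only: Suc.IH) (simp add: algebra_simps)
  also have "\<dots> = real N * real (N + Suc s - 1 choose Suc s)"
    by (simp only: pascal)
  finally show ?case
    by (simp only: of_nat_Suc add.assoc add.commute[of 1])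
qed

lemma summable_power_div_choose:
  fixes z :: real
  assumes "\<bar>z\<bar> < 1"
  shows "summable (\<lambda>k. z ^ k / real (N + k choose k))"
proof (rule summable_comparison_test)
  have "\<bar>z\<bar> ^ k / real (N + k choose k) \<le> \<bar>z\<bar> ^ k / 1" for k
    by (intro divide_left_mono) (auto simp: Suc_leI)
  then show "\<exists>N0. \<forall>k\<ge>N0. norm (z ^ k / real (N + k choose k)) \<le> \<bar>z\<bar> ^ k"
    by (simp add: power_abs)
  show "summable (\<lambda>k. \<bar>z\<bar> ^ k)"
    using assms by (simp add: summable_geometric)
qed

lemma pochhammer_plus_1_eq_choose:
  "pochhammer (real N + 1) k = fact k * real (N + k choose k)"
proof -
  have "real (N + k choose k) = pochhammer (real N + 1) k / fact k"
    by (simp add: binomial_gbinomial gbinomial_pochhammer')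
  then show ?thesis
    by simp
qed

lemma hyp2F1_1_1_eq:
  "hyp2F1 1 1 (real N + 1) z = (\<Sum>k. z ^ k / real (N + k choose k))"
proof -
  have coefficient: "fact k * fact k / (fact k * real (N + k choose k)) * z ^ k / fact k
      = z ^ k / real (N + k choose k)" for k
    by simp
  show ?thesis
    unfolding hyp2F1_def pochhammer_plus_1_eq_choose pochhammer_fact[symmetric] coefficient ..
qed

lemma neg_binomial_ratio_convolution:
  assumes "N \<ge> 2" and "p \<in> {0<..1}"
  shows "pmf (neg_binomial_pmf N p) s * (real N / (real N + real s))
           = (\<Sum>k\<le>s. p * (1 - p) ^ k / real (N + k choose k) * pmf (neg_binomial_pmf (N - 1) p) (s - k))"
proof -
  let ?S = "\<Sum>k\<le>s. 1 / real (N + k choose k) * real (N - 2 + (s - k) choose (s - k))"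
  have "p * (1 - p) ^ k / real (N + k choose k) * pmf (neg_binomial_pmf (N - 1) p) (s - k)
      = p ^ N * (1 - p) ^ s * (1 / real (N + k choose k) * real (N - 2 + (s - k) choose (s - k)))"
    if "k \<le> s" for k
  proof -
    have "s - k + (N - 1) - 1 = N - 2 + (s - k)"
      using assms(1) by simp
    then have "pmf (neg_binomial_pmf (N - 1) p) (s - k) = real (N - 2 + (s - k) choose (s - k)) * p ^ (N - 1) * (1 - p) ^ (s - k)"
      using pmf_neg_binomial[OF assms(2)] by simp
    moreover have "p ^ N = p * p ^ (N - 1)" "(1 - p) ^ s = (1 - p) ^ k * (1 - p) ^ (s - k)"
      using assms(1) that by (simp_all flip: power_Suc power_add)
    ultimately show ?thesis
      by (simp add: divide_inverse mult_ac)
  qed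
  then have "(\<Sum>k\<le>s. p * (1 - p) ^ k / real (N + k choose k) * pmf (neg_binomial_pmf (N - 1) p) (s - k))
      = p ^ N * (1 - p) ^ s * ?S"
    by (simp add: sum_distrib_left)
  also have "?S = real N * real (N + s - 1 choose s) / (real N + real s)"
    using assms(1) inverse_choose_convolution[OF assms(1), of s]
    by (intro eq_divide_imp) (simp_all add: mult.commute)
  also have "p ^ N * (1 - p) ^ s * (real N * real (N + s - 1 choose s) / (real N + real s))
      = pmf (neg_binomial_pmf N p) s * (real N / (real N + real s))"
    using pmf_neg_binomial[OF assms(2), of N s] by (simp add: add.commute[of s])
  finally show ?thesis ..
qed

lemma neg_binomial_pmf_ratio_sums:
  assumes "N \<ge> 2" and "0 < p" and "p < 1"
  shows "(\<lambda>s. pmf (neg_binomial_pmf N p) s * (real N / (real N + real s)))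
           sums (\<Sum>k. p * (1 - p) ^ k / real (N + k choose k))"
proof -
  define x where "x k = p * (1 - p) ^ k / real (N + k choose k)" for k
  define y where "y = pmf (neg_binomial_pmf (N - 1) p)"
  have "summable (\<lambda>k. (1 - p) ^ k / real (N + k choose k))"
    using assms(2,3) by (intro summable_power_div_choose) simp
  from summable_mult[OF this, of p] have "summable (\<lambda>k. norm (x k))"
    using assms(2,3) by (simp add: x_def)
  moreover have "summable (\<lambda>j. norm (y j))" "(\<Sum>j. y j) = 1"
    using pmf_nat_sums_1[of "neg_binomial_pmf (N - 1) p"] by (simp_all add: y_def sums_iff)
  ultimately have "(\<lambda>s. \<Sum>k\<le>s. x k * y (s - k)) sums (\<Sum>k. x k)"
    using Cauchy_product_sums[of x y] by simp
  moreover have "p \<in> {0<..1}"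
    using assms(2,3) by simp
  ultimately show ?thesis
    by (simp only: neg_binomial_ratio_convolution[OF assms(1)] x_def y_def)
qed

lemma expectation_neg_binomial_ratio:
  assumes "N \<ge> 2" and "0 < p" and "p < 1"
  shows "measure_pmf.expectation (neg_binomial_pmf N p) (\<lambda>s. real N / (real N + real s))
           = (\<Sum>k. p * (1 - p) ^ k / real (N + k choose k))"
proof -
  note sums = neg_binomial_pmf_ratio_sums[OF assms]
  moreover from sums have "summable (\<lambda>s. norm (pmf (neg_binomial_pmf N p) s * (real N / (real N + real s))))"
    by (simp add: sums_iff)
  ultimately show ?thesis
    by (simp add: expectation_nat_pmf_eq_suminf sums_iff)
qed

lemma map_sample_excess:
  assumes "N = (\<Sum>i<m. n i)"
  shows "map_pmf (\<lambda>X. \<Sum>ij\<in>obs_index m n. nat (X ij - a)) (sample_pmf m n a p) = neg_binomial_pmf N p"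
proof -
  have I: "obs_index m n = Sigma {..<m} (\<lambda>i. {..<n i})"
    by (auto simp: obs_index_def)
  have finite: "finite (obs_index m n)"
    by (simp add: I)
  have card: "card (obs_index m n) = N"
    using assms by (simp add: I)
  have geometric: "map_pmf (\<lambda>x. nat (x - a)) (shifted_geom_pmf a p) = geometric_pmf p"
    by (simp add: shifted_geom_pmf_def map_pmf_comp)
  show ?thesis
    using map_sum_Pi_pmf_geometric[OF finite geometric, of 0] unfolding sample_pmf_def card .
qed

lemma p_ml_eq_excess_ratio:
  assumes "N = (\<Sum>i<m. n i)" and "N > 0" and "X \<in> set_pmf (sample_pmf m n a p)"
  shows "p_ml m n a X = real N / (real N + real (\<Sum>ij\<in>obs_index m n. nat (X ij - a)))"
proof -
  let ?I = "obs_index m n"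
  have I: "?I = Sigma {..<m} (\<lambda>i. {..<n i})"
    by (auto simp: obs_index_def)
  then have "X \<in> PiE_dflt ?I 0 (\<lambda>_. set_pmf (shifted_geom_pmf a p))"
    using assms(3) by (simp add: sample_pmf_def set_Pi_pmf o_def)
  then have "X ij \<ge> a" if "ij \<in> ?I" for ij
    using that by (cases ij) (force simp: PiE_dflt_def shifted_geom_pmf_def)
  then have "(\<Sum>ij\<in>?I. real_of_int (X ij)) = (\<Sum>ij\<in>?I. real_of_int a + real (nat (X ij - a)))"
    by (intro sum.cong) simp_all
  also have "\<dots> = real N * real_of_int a + real (\<Sum>ij\<in>?I. nat (X ij - a))"
    using assms(1) by (simp add: sum.distrib I)
  finally have "p_ml m n a X = 1 / ((real N * real_of_int a + real (\<Sum>ij\<in>?I. nat (X ij - a))) / real N - real_of_int a + 1)"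
    unfolding p_ml_def grand_mean_def assms(1)[symmetric] by simp
  also have "\<dots> = real N / (real N + real (\<Sum>ij\<in>?I. nat (X ij - a)))"
    using assms(2) by (simp add: field_simps)
  finally show ?thesis .
qed

lemma expectation_p_ml:
  assumes "N = (\<Sum>i<m. n i)" and "N \<ge> 2" and "0 < p" and "p < 1"
  shows "measure_pmf.expectation (sample_pmf m n a p) (p_ml m n a)
           = (\<Sum>k. p * (1 - p) ^ k / real (N + k choose k))"
proof -
  let ?S = "\<lambda>X. \<Sum>ij\<in>obs_index m n. nat (X ij - a)"
  have "measure_pmf.expectation (sample_pmf m n a p) (p_ml m n a)
      = measure_pmf.expectation (sample_pmf m n a p) (\<lambda>X. real N / (real N + real (?S X)))"
    using assms(1,2) by (intro integral_cong_AE) (auto simp: AE_measure_pmf_iff p_ml_eq_excess_ratio)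
  also have "\<dots> = measure_pmf.expectation (neg_binomial_pmf N p) (\<lambda>s. real N / (real N + real s))"
    by (simp flip: map_sample_excess[OF assms(1), of a p])
  also have "\<dots> = (\<Sum>k. p * (1 - p) ^ k / real (N + k choose k))"
    using assms(2-4) by (rule expectation_neg_binomial_ratio)
  finally show ?thesis .
qed

theorem mainTheorem4:
  fixes m :: nat and n :: "nat \<Rightarrow> nat" and a :: int and p :: real and N :: nat
  assumes "N = (\<Sum>i<m. n i)" and "N \<ge> 2" and "0 < p" and "p < 1"
  shows "(measure_pmf.expectation (sample_pmf m n a p) (p_ml m n a)
           = p * hyp2F1 1 1 (real N + 1) (1 - p)) \<and>
         (measure_pmf.expectation (sample_pmf m n a p) (p_ml m n a)
           = p + (\<Sum>k. p * (1 - p) ^ (k + 1) / real ((N + (k + 1)) choose (k + 1)))) \<and>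
         (measure_pmf.expectation (sample_pmf m n a p) (p_ml m n a) - p
           = (\<Sum>k. p * (1 - p) ^ (k + 1) / real ((N + (k + 1)) choose (k + 1)))) \<and>
         (measure_pmf.expectation (sample_pmf m n a p) (p_b m n a) - p
           = - p / real N + (real N - 1) / real N *
               (\<Sum>k. p * (1 - p) ^ (k + 1) / real ((N + (k + 1)) choose (k + 1))))"
proof -
  define bias where "bias = (\<Sum>k. p * (1 - p) ^ (k + 1) / real ((N + (k + 1)) choose (k + 1)))"
  have summable: "summable (\<lambda>k. (1 - p) ^ k / real (N + k choose k))"
    using assms(3,4) by (intro summable_power_div_choose) simp
  have E_ml: "measure_pmf.expectation (sample_pmf m n a p) (p_ml m n a)
      = (\<Sum>k. p * (1 - p) ^ k / real (N + k choose k))"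
    by (rule expectation_p_ml[OF assms])
  also have "\<dots> = p * hyp2F1 1 1 (real N + 1) (1 - p)"
    unfolding hyp2F1_1_1_eq using suminf_mult[OF summable, of p] by simp
  finally have E_ml_hyp2F1: "measure_pmf.expectation (sample_pmf m n a p) (p_ml m n a)
      = p * hyp2F1 1 1 (real N + 1) (1 - p)" .
  have E_ml_bias: "measure_pmf.expectation (sample_pmf m n a p) (p_ml m n a) = p + bias"
    using E_ml suminf_split_head[OF summable_mult[OF summable, of p]] by (simp add: bias_def)
  have "measure_pmf.expectation (sample_pmf m n a p) (p_b m n a)
      = (real N - 1) / real N * measure_pmf.expectation (sample_pmf m n a p) (p_ml m n a)"
    unfolding p_b_def assms(1)[symmetric] by simp
  also have "\<dots> = (real N - 1) / real N * (p + bias)"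
    by (simp only: E_ml_bias)
  also have "\<dots> = p - p / real N + (real N - 1) / real N * bias"
    using assms(2) by (simp add: field_simps)
  finally have E_b_bias: "measure_pmf.expectation (sample_pmf m n a p) (p_b m n a) - p
      = - p / real N + (real N - 1) / real N * bias"
    by simp
  then show ?thesis
    using E_ml_hyp2F1 E_ml_bias E_b_bias by (simp add: bias_def)
qed

end
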